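(* Let $A,B\in \mathbb{R}^{m\times n}$ with $m<n$ and $b\in \mathbb{R}^m$. If the equation $Ax-B|x|=b$ has a solution with more than $m$ nonzero entries, then it has infinitely many solutions with the same sign pattern as that known solution.
   Context: $|x|$ is the entrywise absolute value. Two vectors have the same sign pattern if their entrywise signs (in $\{-1,0,1\}$) agree. *)

theory Defs
  imports "HOL-Analysis.Analysis"
begin

definition vabs :: "real ^ 'n \<Rightarrow> real ^ 'n" where
  "vabs x = (\<chi> i. \<bar>x $ i\<bar>)"

definition same_sign_pattern :: "real ^ 'n \<Rightarrow> real ^ 'n \<Rightarrow> bool" where
  "same_sign_pattern x y \<longleftrightarrow> (\<forall>i. sgn (x $ i) = sgn (y $ i))"

end

theory Submission
  imports Defs
begin

text \<open>On the vectors sharing the sign pattern of \<open>x0\<close>, \<open>\<bar>x\<bar> = s * x\<close> with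
  \<open>s = sgn x0\<close> entrywise, so there the equation reads \<open>L x = b\<close> for the linear map
  \<open>L x = A x - B (s * x)\<close>. Restricted to the coordinate subspace of the support of \<open>x0\<close>, which has
  dimension greater than \<open>m\<close>, \<open>L\<close> has a nonzero kernel vector \<open>v\<close>. Moving from \<open>x0\<close> along \<open>v\<close>
  by a small \<open>t > 0\<close> changes no sign, hence every \<open>x0 + t v\<close> is again a solution.\<close>

lemma linear_kernel_meets_coordinate_subspace:
  fixes f :: "real ^ 'n \<Rightarrow> real ^ 'm"
  assumes "linear f" and "card S > CARD('m)"
  shows "\<exists>v. v \<noteq> 0 \<and> (\<forall>j. j \<notin> S \<longrightarrow> v $ j = 0) \<and> f v = 0"
proof -
  define U where "U = {v :: real ^ 'n. \<forall>j. j \<notin> S \<longrightarrow> v $ j = 0}"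
  have "subspace U"
    by (auto simp: U_def subspace_def)
  have "\<not> inj_on f U"
  proof
    assume "inj_on f U"
    then have "dim (f ` U) = dim U"
      using \<open>linear f\<close> \<open>subspace U\<close> by (metis dim_image_eq span_eq_iff)
    also have "dim U = card S"
      unfolding U_def dim_vec_eq[symmetric] by (rule dim_substandard_cart)
    finally show False
      using dim_subset_UNIV_cart[of "f ` U"] assms(2) by simp
  qed
  then obtain u w where "u \<in> U" "w \<in> U" "u \<noteq> w" "f u = f w"
    by (auto simp: inj_on_def)
  then show ?thesis
    by (intro exI[of _ "u - w"]) (auto simp: U_def linear_diff[OF \<open>linear f\<close>])
qed

lemma sgn_add_small:
  fixes a e :: real
  assumes "\<bar>e\<bar> < \<bar>a\<bar>"
  shows "sgn (a + e) = sgn a"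
  using assms by (simp add: sgn_if abs_if split: if_splits)

lemma eventually_same_sign_pattern_along:
  fixes x0 v :: "real ^ 'n"
  assumes "\<forall>j. x0 $ j = 0 \<longrightarrow> v $ j = 0"
  shows "\<forall>\<^sub>F t in at 0. same_sign_pattern (x0 + t *\<^sub>R v) x0"
proof -
  have "\<forall>\<^sub>F t in at 0. sgn (x0 $ j + t * v $ j) = sgn (x0 $ j)" for j
  proof (cases "x0 $ j = 0")
    case False
    have "((\<lambda>t. \<bar>t * v $ j\<bar>) \<longlongrightarrow> 0) (at (0::real))"
      by (intro tendsto_eq_intros) auto
    then have "\<forall>\<^sub>F t in at 0. \<bar>t * v $ j\<bar> < \<bar>x0 $ j\<bar>"
      using False by (intro order_tendstoD) auto
    then show ?thesis
      by eventually_elim (rule sgn_add_small)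
  qed (use assms in simp)
  then show ?thesis
    unfolding same_sign_pattern_def by (simp add: eventually_all_finite)
qed

lemma vabs_same_sign_pattern:
  assumes "same_sign_pattern x x0"
  shows "vabs x = (\<chi> j. sgn (x0 $ j)) * x"
  using assms unfolding same_sign_pattern_def vabs_def
  by (simp add: vec_eq_iff abs_sgn)

theorem corollary3p2:
  fixes A B :: "real ^ 'n ^ 'm" and b :: "real ^ 'm" and x0 :: "real ^ 'n"
  assumes "CARD('m) < CARD('n)"
    and "A *v x0 - B *v vabs x0 = b"
    and "card {i. x0 $ i \<noteq> 0} > CARD('m)"
  shows "infinite {x. A *v x - B *v vabs x = b \<and> same_sign_pattern x x0}"
proof -
  \<comment> \<open>The hypothesis \<open>CARD('m) < CARD('n)\<close> is implied by the last one and not needed.\<close>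
  define L where "L v = A *v v - B *v ((\<chi> j. sgn (x0 $ j)) * v)" for v
  have "linear L"
    unfolding L_def
    by (intro linearI) (simp_all add: vec_eq_iff algebra_simps matrix_vector_right_distrib)
  obtain v where "v \<noteq> 0" and v_supp: "\<forall>j. x0 $ j = 0 \<longrightarrow> v $ j = 0" and "L v = 0"
    using linear_kernel_meets_coordinate_subspace[OF \<open>linear L\<close> assms(3)] by auto
  obtain \<epsilon> where "\<epsilon> > 0"
    and same_sign: "\<And>t. 0 < t \<Longrightarrow> t < \<epsilon> \<Longrightarrow> same_sign_pattern (x0 + t *\<^sub>R v) x0"
    using eventually_same_sign_pattern_along[OF v_supp]
    by (auto simp: eventually_at_split eventually_at_right_field)
  have solution: "x0 + t *\<^sub>R v \<in> {x. A *v x - B *v vabs x = b \<and> same_sign_pattern x x0}"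
    if "0 < t" "t < \<epsilon>" for t
  proof -
    have "A *v (x0 + t *\<^sub>R v) - B *v vabs (x0 + t *\<^sub>R v) = L (x0 + t *\<^sub>R v)"
      using same_sign[OF that] by (simp add: L_def vabs_same_sign_pattern)
    also have "\<dots> = L x0"
      using \<open>L v = 0\<close> by (simp add: linear_add[OF \<open>linear L\<close>] linear_scale[OF \<open>linear L\<close>])
    also have "\<dots> = b"
      using assms(2) vabs_same_sign_pattern[of x0 x0] by (simp add: L_def same_sign_pattern_def)
    finally show ?thesis
      using same_sign[OF that] by simp
  qed
  have "inj_on (\<lambda>t. x0 + t *\<^sub>R v) {0<..<\<epsilon>}"
    using \<open>v \<noteq> 0\<close> by (auto simp: inj_on_def)
  then have "infinite ((\<lambda>t. x0 + t *\<^sub>R v) ` {0<..<\<epsilon>})"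
    using \<open>\<epsilon> > 0\<close> by (metis finite_imageD infinite_Ioo)
  then show ?thesis
    using solution by (elim infinite_super[rotated]) auto
qed

end
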